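(* Let $\varphi=\nu\tilde n.\sigma$ be a frame that is well-formed with respect to a name $\mathtt{s}$, where $\mathtt{s}\in\tilde n$ is a restricted name of $\varphi$. Then $\varphi\nvdash \mathtt{s}$ if and only if $\varphi[\mathtt{s}/M]\approx \varphi[\mathtt{s}/M']$ for all closed terms $M,M'$ that are public with respect to $\varphi$.
   Context: Terms are built over the signature $\Sigma$ consisting of $\mathsf{enc}$ (arity 3), $\mathsf{dec}$ (2), $\mathsf{enca}$ (3), $\mathsf{deca}$ (2), $\mathsf{pub}$ (1), $\mathsf{priv}$ (1), pairing $\langle\cdot,\cdot\rangle$ (2), $\pi_1,\pi_2$ (1), $\mathsf{sign}$ (2), $\mathsf{check}$ (3), $\mathsf{retrieve}$ (1), together with a set of constants (including $\mathsf{ok}$), an infinite set $\mathcal N$ of names and an infinite set $\mathcal X$ of variables. Constructors are $\langle\rangle,\mathsf{enc},\mathsf{enca},\mathsf{sign}$; destructors are $\pi_1,\pi_2,\mathsf{dec},\mathsf{deca},\mathsf{check},\mathsf{retrieve}$. $\mathrm{fn}(T)$ is the set of names of $T$; a term is closed (ground) if it has no variables. Positions are finite sequences of positive integers ($\epsilon$ the root), $T|_p$ is the subterm at $p$. The equational theory $E$ is generated by $\pi_1(\langle z_1,z_2\rangle)=z_1$, $\pi_2(\langle z_1,z_2\rangle)=z_2$, $\mathsf{dec}(\mathsf{enc}(z_1,z_2,z_3),z_2)=z_1$, $\mathsf{deca}(\mathsf{enca}(z_1,\mathsf{pub}(z_2),z_3),\mathsf{priv}(z_2))=z_1$, $\mathsf{check}(z_1,\mathsf{sign}(z_1,\mathsf{priv}(z_2)),\mathsf{pub}(z_2))=\mathsf{ok}$,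 $\mathsf{retrieve}(\mathsf{sign}(z_1,z_2))=z_1$; $=_E$ is the induced equality. A frame $\varphi=\nu\tilde n.\sigma$ consists of a finite set $\tilde n$ of (restricted) names and an acyclic substitution $\sigma=\{y_1\mapsto M_1,\dots,y_l\mapsto M_l\}$; $\mathrm{dom}(\varphi)=\{y_1,\dots,y_l\}$, $\mathrm{ran}(\sigma)=\{M_1,\dots,M_l\}$. A term is public w.r.t. $\varphi$ (or w.r.t. $\tilde n$) if it contains no name of $\tilde n$ and no symbol $\mathsf{priv}$. Deducibility $\varphi\vdash M$ is the smallest relation such that $\varphi\vdash x\sigma$ for $x\in\mathrm{dom}(\sigma)$, $\varphi\vdash m$ for every name $m\notin\tilde n$, if $\varphi\vdash T_1,\dots,\varphi\vdash T_k$ then $\varphi\vdash f(T_1,\dots,T_k)$ for every $f\neq\mathsf{priv}$ of arity $k$, and if $\varphi\vdash T$ and $T=_E T'$ then $\varphi\vdash T'$. For $\mathtt{s}\in\tilde n$ and $M$ with $\mathrm{fn}(M)\cap\tilde n=\emptyset$, $\varphi[\mathtt{s}/M]=\nu\tilde n.\sigma[\mathtt{s}/M]$ replaces every occurrence of $\mathtt{s}$ in the terms of $\sigma$ by $M$. A frame $\nu\tilde n.\sigma$ passes the test $(U,V)$ if, after renaming the names of $\tilde n$ so that none occurs in $U$ or $V$, $U\sigma=_E V\sigma$. Two frames $\varphi,\varphi'$ are statically equivalent, $\varphi\approx\varphi'$, if $\mathrm{dom}(\varphi)=\mathrm{dom}(\varphi')$ and for all terms $U,V$ public w.r.t. both frames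 with variables in $\mathrm{dom}(\varphi)$, $\varphi$ passes $(U,V)$ iff $\varphi'$ passes $(U,V)$. An encryption (occurrence) in a term $U$ is a position $q$ with head symbol of $U|_q$ in $\{\mathsf{enc},\mathsf{enca}\}$. It is an agent encryption w.r.t. a set of names $\tilde m$ if $U|_{q\cdot 3}\in\tilde m$. It is a probabilistic encryption w.r.t. a set of terms $S$ if for every $V\in S$ and position $p$ with $V|_p=U|_{q\cdot 3}$ we have $p=q'\cdot 3$ for some $q'$ with $V|_{q'}=U|_q$. A frame $\varphi=\nu\tilde n.\sigma$ is well-formed w.r.t. a name $\mathtt{s}$ if: (1) every encryption occurring in the terms of $\sigma$ is an agent encryption w.r.t. $\tilde n\setminus\{\mathtt{s}\}$ and a probabilistic encryption w.r.t. $\mathrm{ran}(\sigma)$; (2) for all subterms $\mathsf{enc}(M,K,R)$, $\mathsf{enca}(M',K',R')$, $\mathsf{sign}(U,V)$, $\mathsf{pub}(W)$, $\mathsf{priv}(W')$ of terms of $\varphi$, $\mathtt{s}\notin\mathrm{fn}(K,K',V,W,W',R,R')$; (3) $\varphi$ contains no destructor symbol. *)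

theory Defs
  imports Main
begin

datatype msg =
    Nm nat | Vr nat | Cst string
  | Enc msg msg msg | Dec msg msg
  | Enca msg msg msg | Deca msg msg
  | Pub msg | Priv msg
  | Pair msg msg | Pi1 msg | Pi2 msg
  | Sign msg msg | Check msg msg msg | Retrieve msg

datatype sym =
    SNm nat | SVr nat | SCst string
  | SEnc | SDec | SEnca | SDeca | SPub | SPriv
  | SPair | SPi1 | SPi2 | SSign | SCheck | SRetrieve

primrec head :: "msg \<Rightarrow> sym" where
  "head (Nm n) = SNm n" | "head (Vr x) = SVr x" | "head (Cst c) = SCst c"
| "head (Enc a b c) = SEnc" | "head (Dec a b) = SDec"
| "head (Enca a b c) = SEnca" | "head (Deca a b) = SDeca"
| "head (Pub a) = SPub" | "head (Priv a) = SPriv"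
| "head (Pair a b) = SPair" | "head (Pi1 a) = SPi1" | "head (Pi2 a) = SPi2"
| "head (Sign a b) = SSign" | "head (Check a b c) = SCheck" | "head (Retrieve a) = SRetrieve"

primrec args :: "msg \<Rightarrow> msg list" where
  "args (Nm n) = []" | "args (Vr x) = []" | "args (Cst c) = []"
| "args (Enc a b c) = [a, b, c]" | "args (Dec a b) = [a, b]"
| "args (Enca a b c) = [a, b, c]" | "args (Deca a b) = [a, b]"
| "args (Pub a) = [a]" | "args (Priv a) = [a]"
| "args (Pair a b) = [a, b]" | "args (Pi1 a) = [a]" | "args (Pi2 a) = [a]"
| "args (Sign a b) = [a, b]" | "args (Check a b c) = [a, b, c]" | "args (Retrieve a) = [a]"

definition is_fun :: "msg \<Rightarrow> bool" where
  "is_fun t \<longleftrightarrow> (\<forall>n. t \<noteq> Nm n) \<and> (\<forall>x. t \<noteq> Vr x)"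

text \<open>Positions are lists of positive integers; the root is []; T|_p is subt T p.\<close>
fun subt :: "msg \<Rightarrow> nat list \<Rightarrow> msg option" where
  "subt t [] = Some t"
| "subt t (i # p) = (if 0 < i \<and> i \<le> length (args t) then subt (args t ! (i - 1)) p else None)"

definition subterms :: "msg \<Rightarrow> msg set" where
  "subterms t = {u. \<exists>p. subt t p = Some u}"

definition fn :: "msg \<Rightarrow> nat set" where
  "fn t = {n. Nm n \<in> subterms t}"

definition vars :: "msg \<Rightarrow> nat set" where
  "vars t = {x. Vr x \<in> subterms t}"

definition closed :: "msg \<Rightarrow> bool" where
  "closed t \<longleftrightarrow> vars t = {}"

primrec lmap :: "(msg \<Rightarrow> msg) \<Rightarrow> msg \<Rightarrow> msg" where
  "lmap f (Nm n) = f (Nm n)" | "lmap f (Vr x) = f (Vr x)" | "lmap f (Cst c) = Cst c"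
| "lmap f (Enc a b c) = Enc (lmap f a) (lmap f b) (lmap f c)"
| "lmap f (Dec a b) = Dec (lmap f a) (lmap f b)"
| "lmap f (Enca a b c) = Enca (lmap f a) (lmap f b) (lmap f c)"
| "lmap f (Deca a b) = Deca (lmap f a) (lmap f b)"
| "lmap f (Pub a) = Pub (lmap f a)" | "lmap f (Priv a) = Priv (lmap f a)"
| "lmap f (Pair a b) = Pair (lmap f a) (lmap f b)"
| "lmap f (Pi1 a) = Pi1 (lmap f a)" | "lmap f (Pi2 a) = Pi2 (lmap f a)"
| "lmap f (Sign a b) = Sign (lmap f a) (lmap f b)"
| "lmap f (Check a b c) = Check (lmap f a) (lmap f b) (lmap f c)"
| "lmap f (Retrieve a) = Retrieve (lmap f a)"

inductive eqE :: "msg \<Rightarrow> msg \<Rightarrow> bool" where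
  ax_pi1: "eqE (Pi1 (Pair z1 z2)) z1"
| ax_pi2: "eqE (Pi2 (Pair z1 z2)) z2"
| ax_dec: "eqE (Dec (Enc z1 z2 z3) z2) z1"
| ax_deca: "eqE (Deca (Enca z1 (Pub z2) z3) (Priv z2)) z1"
| ax_check: "eqE (Check z1 (Sign z1 (Priv z2)) (Pub z2)) (Cst ''ok'')"
| ax_retrieve: "eqE (Retrieve (Sign z1 z2)) z1"
| refl: "eqE t t"
| sym: "eqE s t \<Longrightarrow> eqE t s"
| trans: "eqE s t \<Longrightarrow> eqE t u \<Longrightarrow> eqE s u"
| cong: "head s = head t \<Longrightarrow> list_all2 eqE (args s) (args t) \<Longrightarrow> eqE s t"

text \<open>A frame nu n.sigma is a pair (restricted names, substitution as a finite map).\<close>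
type_synonym frame = "nat set \<times> (nat \<rightharpoonup> msg)"

definition acyclic_subst :: "(nat \<rightharpoonup> msg) \<Rightarrow> bool" where
  "acyclic_subst \<sigma> \<longleftrightarrow> acyclic {(x, y). y \<in> dom \<sigma> \<and> x \<in> vars (the (\<sigma> y))}"

definition is_frame :: "frame \<Rightarrow> bool" where
  "is_frame \<phi> \<longleftrightarrow> finite (fst \<phi>) \<and> finite (dom (snd \<phi>)) \<and> acyclic_subst (snd \<phi>)"

definition sapp :: "(nat \<rightharpoonup> msg) \<Rightarrow> msg \<Rightarrow> msg" where
  "sapp \<sigma> = lmap (\<lambda>t. case t of Vr x \<Rightarrow> (case \<sigma> x of Some u \<Rightarrow> u | None \<Rightarrow> t) | _ \<Rightarrow> t)"

text \<open>Application of the (acyclic) substitution of a frame: iterate until all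
variables of the domain are eliminated (card dom + 1 steps suffice).\<close>
definition fapp :: "frame \<Rightarrow> msg \<Rightarrow> msg" where
  "fapp \<phi> U = (sapp (snd \<phi>) ^^ Suc (card (dom (snd \<phi>)))) U"

definition public :: "nat set \<Rightarrow> msg \<Rightarrow> bool" where
  "public N t \<longleftrightarrow> fn t \<inter> N = {} \<and> (\<forall>u \<in> subterms t. head u \<noteq> SPriv)"

inductive deduc :: "frame \<Rightarrow> msg \<Rightarrow> bool" where
  d_frame: "x \<in> dom (snd \<phi>) \<Longrightarrow> deduc \<phi> (fapp \<phi> (Vr x))"
| d_name: "m \<notin> fst \<phi> \<Longrightarrow> deduc \<phi> (Nm m)"
| d_fun: "is_fun t \<Longrightarrow> head t \<noteq> SPriv \<Longrightarrow> (\<forall>a \<in> set (args t). deduc \<phi> a) \<Longrightarrow> deduc \<phi> t"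
| d_eq: "deduc \<phi> t \<Longrightarrow> eqE t t' \<Longrightarrow> deduc \<phi> t'"

definition frame_repl :: "frame \<Rightarrow> nat \<Rightarrow> msg \<Rightarrow> frame" where
  "frame_repl \<phi> s M = (fst \<phi>, \<lambda>x. map_option (lmap (\<lambda>t. if t = Nm s then M else t)) (snd \<phi> x))"

text \<open>Passing a test; the renaming of restricted names is vacuous since the tests
considered are public (contain no restricted name).\<close>
definition passes :: "frame \<Rightarrow> msg \<Rightarrow> msg \<Rightarrow> bool" where
  "passes \<phi> U V \<longleftrightarrow> eqE (fapp \<phi> U) (fapp \<phi> V)"

definition stat_eq :: "frame \<Rightarrow> frame \<Rightarrow> bool" where
  "stat_eq \<phi> \<phi>' \<longleftrightarrow> dom (snd \<phi>) = dom (snd \<phi>') \<and>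
     (\<forall>U V. public (fst \<phi>) U \<and> public (fst \<phi>') U \<and> public (fst \<phi>) V \<and> public (fst \<phi>') V
        \<and> vars U \<subseteq> dom (snd \<phi>) \<and> vars V \<subseteq> dom (snd \<phi>)
        \<longrightarrow> (passes \<phi> U V \<longleftrightarrow> passes \<phi>' U V))"

definition is_enc :: "msg \<Rightarrow> bool" where
  "is_enc t \<longleftrightarrow> head t = SEnc \<or> head t = SEnca"

definition agent_enc :: "nat set \<Rightarrow> msg \<Rightarrow> nat list \<Rightarrow> bool" where
  "agent_enc N U q \<longleftrightarrow> (\<exists>n \<in> N. subt U (q @ [3]) = Some (Nm n))"

definition prob_enc :: "msg set \<Rightarrow> msg \<Rightarrow> nat list \<Rightarrow> bool" where
  "prob_enc S U q \<longleftrightarrow> (\<forall>V \<in> S. \<forall>p. subt U (q @ [3]) \<noteq> None \<and> subt V p = subt U (q @ [3])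
      \<longrightarrow> (\<exists>q'. p = q' @ [3] \<and> subt V q' = subt U q))"

definition key_ok :: "nat \<Rightarrow> msg \<Rightarrow> bool" where
  "key_ok s u \<longleftrightarrow> (case u of
       Enc M K R \<Rightarrow> s \<notin> fn K \<union> fn R
     | Enca M K R \<Rightarrow> s \<notin> fn K \<union> fn R
     | Sign U V \<Rightarrow> s \<notin> fn V
     | Pub W \<Rightarrow> s \<notin> fn W
     | Priv W \<Rightarrow> s \<notin> fn W
     | _ \<Rightarrow> True)"

definition is_destr :: "msg \<Rightarrow> bool" where
  "is_destr t \<longleftrightarrow> head t \<in> {SPi1, SPi2, SDec, SDeca, SCheck, SRetrieve}"

definition well_formed :: "frame \<Rightarrow> nat \<Rightarrow> bool" where
  "well_formed \<phi> s \<longleftrightarrow>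
     (\<forall>U \<in> ran (snd \<phi>). \<forall>q u. subt U q = Some u \<and> is_enc u \<longrightarrow>
         agent_enc (fst \<phi> - {s}) U q \<and> prob_enc (ran (snd \<phi>)) U q)
   \<and> (\<forall>U \<in> ran (snd \<phi>). \<forall>u \<in> subterms U. key_ok s u)
   \<and> (\<forall>U \<in> ran (snd \<phi>). \<forall>u \<in> subterms U. \<not> is_destr u)"

end

theory Submission
  imports Defs
begin

text \<open>If s is deducible, a recipe for s is a test separating the frames obtained by replacing s
with two different constants. Conversely, suppose s is not deducible. Call a term good if s
occurs in it only inside (instances of) encryptions of the frame, which are recognised by their
random names even after s has been replaced. The normal form of every deducible term is good:
well-formedness keeps s out of keys and randomness, so an exposed occurrence of s could be
extracted by projections and retrieval. Replacing s by a closed term is injective on good terms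
and commutes with normalisation, so a public test is passed after the replacement exactly when
it is passed by the original frame, whatever term replaces s.\<close>

definition leaf :: "msg \<Rightarrow> bool" where
  "leaf t \<longleftrightarrow> (\<exists>n. t = Nm n) \<or> (\<exists>x. t = Vr x)"

lemma leaf_simps [simp]:
  "leaf (Nm n)" "leaf (Vr x)" "\<not> leaf (Cst c)"
  "\<not> leaf (Enc a b d)" "\<not> leaf (Dec a b)" "\<not> leaf (Enca a b d)" "\<not> leaf (Deca a b)"
  "\<not> leaf (Pub a)" "\<not> leaf (Priv a)" "\<not> leaf (Pair a b)" "\<not> leaf (Pi1 a)" "\<not> leaf (Pi2 a)"
  "\<not> leaf (Sign a b)" "\<not> leaf (Check a b d)" "\<not> leaf (Retrieve a)"
  by (auto simp: leaf_def)

lemma leafE: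
  assumes "leaf t" obtains n where "t = Nm n" | x where "t = Vr x"
  using assms by (auto simp: leaf_def)

lemma leaf_args: "leaf t \<Longrightarrow> args t = []"
  by (auto simp: leaf_def)

lemma leaf_iff_head: "head s = head t \<Longrightarrow> leaf s \<longleftrightarrow> leaf t"
  by (cases s; cases t; simp)

lemma is_fun_iff_not_leaf: "is_fun t \<longleftrightarrow> \<not> leaf t"
  by (auto simp: is_fun_def leaf_def)

lemma msg_eqI: "head s = head t \<Longrightarrow> args s = args t \<Longrightarrow> s = t"
  by (cases s; cases t; simp)

lemma exists_head_args:
  assumes "\<not> leaf t" "length us = length (args t)"
  shows "\<exists>u. head u = head t \<and> args u = us"
  using assms by (cases t) (auto simp: length_Suc_conv intro: head.simps args.simps)

lemma size_arg: "a \<in> set (args t) \<Longrightarrow> size a < size t"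
  by (cases t) auto

lemma msg_args_induct [case_names args]:
  "(\<And>t. (\<And>a. a \<in> set (args t) \<Longrightarrow> P a) \<Longrightarrow> P t) \<Longrightarrow> P t"
  by (induction t rule: measure_induct_rule[of size]) (metis size_arg)

lemma subt_append: "subt t (p @ q) = (case subt t p of None \<Rightarrow> None | Some v \<Rightarrow> subt v q)"
  by (induction p arbitrary: t) auto

lemma subterms_rec: "subterms t = insert t (\<Union>a \<in> set (args t). subterms a)"
proof (rule set_eqI, rule iffI)
  fix u assume "u \<in> subterms t"
  then obtain p where p: "subt t p = Some u" by (auto simp: subterms_def)
  show "u \<in> insert t (\<Union>a \<in> set (args t). subterms a)"
  proof (cases p)
    case (Cons i p')
    with p have "0 < i" "i \<le> length (args t)" "subt (args t ! (i - 1)) p' = Some u"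
      by (auto split: if_splits)
    then show ?thesis by (auto simp: subterms_def intro!: bexI[of _ "args t ! (i - 1)"])
  qed (use p in simp)
next
  fix u assume "u \<in> insert t (\<Union>a \<in> set (args t). subterms a)"
  then consider "u = t" | j p where "j < length (args t)" "subt (args t ! j) p = Some u"
    by (auto simp: subterms_def in_set_conv_nth)
  then show "u \<in> subterms t"
  proof cases
    case 1 then show ?thesis by (auto simp: subterms_def intro: exI[of _ "[]"])
  next
    case 2 then have "subt t (Suc j # p) = Some u" by simp
    then show ?thesis unfolding subterms_def by blast
  qed
qed

lemma subterms_self [simp]: "t \<in> subterms t"
  by (subst subterms_rec) simp

lemma subterms_arg: "a \<in> set (args t) \<Longrightarrow> u \<in> subterms a \<Longrightarrow> u \<in> subterms t"
  by (subst subterms_rec) blast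

lemma arg_in_subterms: "a \<in> set (args t) \<Longrightarrow> a \<in> subterms t"
  using subterms_arg subterms_self by blast

lemma subterms_leaf: "leaf t \<Longrightarrow> subterms t = {t}"
  by (subst subterms_rec) (simp add: leaf_args)

lemma subterms_trans: "u \<in> subterms t \<Longrightarrow> v \<in> subterms u \<Longrightarrow> v \<in> subterms t"
proof (induction t rule: msg_args_induct)
  case (args t)
  then show ?case
    by (subst (asm) subterms_rec) (auto intro: subterms_arg)
qed

lemma subterms_subt: "subt t p = Some u \<Longrightarrow> u \<in> subterms t"
  by (auto simp: subterms_def)

lemma fn_simps [simp]: "fn (Nm n) = {n}" "fn (Vr x) = {}"
  by (subst fn_def, subst subterms_rec, simp)+

lemma vars_simps [simp]: "vars (Nm n) = {}" "vars (Vr x) = {x}"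
  by (subst vars_def, subst subterms_rec, simp)+

lemma fn_nonleaf: "\<not> leaf t \<Longrightarrow> fn t = (\<Union>a \<in> set (args t). fn a)"
  by (subst fn_def, subst subterms_rec) (auto simp: fn_def leaf_def)

lemma vars_nonleaf: "\<not> leaf t \<Longrightarrow> vars t = (\<Union>a \<in> set (args t). vars a)"
  by (subst vars_def, subst subterms_rec) (auto simp: vars_def leaf_def)

lemma public_simps [simp]: "public N (Nm n) \<longleftrightarrow> n \<notin> N" "public N (Vr x)"
  by (auto simp: public_def subterms_leaf)

lemma public_nonleaf:
  "\<not> leaf t \<Longrightarrow> public N t \<longleftrightarrow> head t \<noteq> SPriv \<and> (\<forall>a \<in> set (args t). public N a)"
  unfolding public_def by (subst subterms_rec) (auto simp: fn_nonleaf)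

lemma closed_public_Cst: "closed (Cst c)" "public N (Cst c)"
  by (simp_all add: closed_def vars_nonleaf public_nonleaf)

lemma finite_vars: "finite (vars t)"
proof -
  have "finite (subterms t)"
    by (induction t rule: msg_args_induct) (subst subterms_rec, auto)
  then show ?thesis
    unfolding vars_def by (rule finite_surj[where f = "\<lambda>u. case u of Vr x \<Rightarrow> x"]) force
qed

section \<open>Normal forms modulo the equational theory\<close>

text \<open>Orienting the axioms from left to right gives a convergent rewrite system; norm computes
its normal forms innermost, red_f contracting a root redex f(x1,...,xn) with normal arguments.\<close>

definition red_Pi1 :: "msg \<Rightarrow> msg" where
  "red_Pi1 x = (case x of Pair a b \<Rightarrow> a | _ \<Rightarrow> Pi1 x)"

definition red_Pi2 :: "msg \<Rightarrow> msg" where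
  "red_Pi2 x = (case x of Pair a b \<Rightarrow> b | _ \<Rightarrow> Pi2 x)"

definition red_Retrieve :: "msg \<Rightarrow> msg" where
  "red_Retrieve x = (case x of Sign a b \<Rightarrow> a | _ \<Rightarrow> Retrieve x)"

definition red_Dec :: "msg \<Rightarrow> msg \<Rightarrow> msg" where
  "red_Dec x k = (case x of Enc a b c \<Rightarrow> if b = k then a else Dec x k | _ \<Rightarrow> Dec x k)"

definition red_Deca :: "msg \<Rightarrow> msg \<Rightarrow> msg" where
  "red_Deca x k =
    (case x of Enca a (Pub w) c \<Rightarrow> if k = Priv w then a else Deca x k | _ \<Rightarrow> Deca x k)"

definition red_Check :: "msg \<Rightarrow> msg \<Rightarrow> msg \<Rightarrow> msg" where
  "red_Check a b c = (if \<exists>w. b = Sign a (Priv w) \<and> c = Pub w then Cst ''ok'' else Check a b c)"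

lemmas red_defs = red_Pi1_def red_Pi2_def red_Retrieve_def red_Dec_def red_Deca_def red_Check_def

fun norm :: "msg \<Rightarrow> msg" where
  "norm (Nm n) = Nm n" | "norm (Vr x) = Vr x" | "norm (Cst c) = Cst c"
| "norm (Enc a b c) = Enc (norm a) (norm b) (norm c)"
| "norm (Enca a b c) = Enca (norm a) (norm b) (norm c)"
| "norm (Pub a) = Pub (norm a)" | "norm (Priv a) = Priv (norm a)"
| "norm (Pair a b) = Pair (norm a) (norm b)"
| "norm (Sign a b) = Sign (norm a) (norm b)"
| "norm (Pi1 a) = red_Pi1 (norm a)" | "norm (Pi2 a) = red_Pi2 (norm a)"
| "norm (Retrieve a) = red_Retrieve (norm a)"
| "norm (Dec a b) = red_Dec (norm a) (norm b)"
| "norm (Deca a b) = red_Deca (norm a) (norm b)"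
| "norm (Check a b c) = red_Check (norm a) (norm b) (norm c)"

abbreviation nf :: "msg \<Rightarrow> bool" where
  "nf t \<equiv> norm t = t"

lemma norm_eq_if_eqE: "eqE s t \<Longrightarrow> norm s = norm t"
proof (induction rule: eqE.induct)
  case (cong s t)
  then have "map norm (args s) = map norm (args t)"
    by (auto simp: list_all2_conv_all_nth intro!: nth_equalityI)
  with cong.hyps show ?case
    by (cases s; cases t) simp_all
qed (auto simp: red_defs)

lemma eqE_red:
  "eqE (Pi1 x) (red_Pi1 x)" "eqE (Pi2 x) (red_Pi2 x)" "eqE (Retrieve x) (red_Retrieve x)"
  "eqE (Dec x k) (red_Dec x k)" "eqE (Deca x k) (red_Deca x k)"
  "eqE (Check x y z) (red_Check x y z)"
  by (auto simp: red_defs intro: eqE.intros split: msg.split)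

lemma eqE_norm: "eqE t (norm t)"
proof (induction t rule: msg_args_induct)
  case (args t)
  show ?case
  proof (cases "leaf t")
    case True
    then show ?thesis by (cases rule: leafE) (auto intro: eqE.refl)
  next
    case False
    then obtain u where u: "head u = head t" "args u = map norm (args t)"
      using exists_head_args[of t "map norm (args t)"] by auto
    have "eqE t u"
      using args u by (intro eqE.cong) (auto simp: list_all2_conv_all_nth)
    moreover have "eqE u (norm t)"
      using u eqE_red[where x = "norm _"] by (cases t; cases u) (auto intro: eqE.refl)
    ultimately show ?thesis
      by (rule eqE.trans)
  qed
qed

lemma eqE_iff_norm: "eqE s t \<longleftrightarrow> norm s = norm t"
  by (metis eqE.sym eqE.trans eqE_norm norm_eq_if_eqE)

lemma norm_norm [simp]: "norm (norm t) = norm t"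
  using norm_eq_if_eqE[OF eqE.sym[OF eqE_norm]] by simp

lemma size_norm: "size (norm t) \<le> size t"
  by (induction t) (auto simp: red_defs split: msg.splits)

fun root_redex :: "msg \<Rightarrow> bool" where
  "root_redex (Pi1 x) \<longleftrightarrow> (\<exists>a b. x = Pair a b)"
| "root_redex (Pi2 x) \<longleftrightarrow> (\<exists>a b. x = Pair a b)"
| "root_redex (Retrieve x) \<longleftrightarrow> (\<exists>a b. x = Sign a b)"
| "root_redex (Dec x k) \<longleftrightarrow> (\<exists>a c. x = Enc a k c)"
| "root_redex (Deca x k) \<longleftrightarrow> (\<exists>a w c. x = Enca a (Pub w) c \<and> k = Priv w)"
| "root_redex (Check a b c) \<longleftrightarrow> (\<exists>w. b = Sign a (Priv w) \<and> c = Pub w)"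
| "root_redex _ \<longleftrightarrow> False"

lemma nf_iff: "nf t \<longleftrightarrow> (\<forall>a \<in> set (args t). nf a) \<and> \<not> root_redex t"
proof
  assume "nf t"
  then show "(\<forall>a \<in> set (args t). nf a) \<and> \<not> root_redex t"
    using size_norm[of "hd (args t)"] by (cases t) (auto simp: red_defs split: msg.splits if_splits)
next
  assume "(\<forall>a \<in> set (args t). nf a) \<and> \<not> root_redex t"
  then show "nf t"
    by (cases t) (auto simp: red_defs split: msg.split)
qed

definition destr_free :: "msg \<Rightarrow> bool" where
  "destr_free t \<longleftrightarrow> (\<forall>u \<in> subterms t. \<not> is_destr u)"

lemma destr_free_rec: "destr_free t \<longleftrightarrow> \<not> is_destr t \<and> (\<forall>a \<in> set (args t). destr_free a)"
  unfolding destr_free_def by (subst subterms_rec) auto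

lemma destr_free_simps [simp]:
  "destr_free (Nm n)" "destr_free (Vr x)" "destr_free (Cst c)"
  "destr_free (Enc a b d) \<longleftrightarrow> destr_free a \<and> destr_free b \<and> destr_free d"
  "destr_free (Enca a b d) \<longleftrightarrow> destr_free a \<and> destr_free b \<and> destr_free d"
  "destr_free (Pub a) \<longleftrightarrow> destr_free a" "destr_free (Priv a) \<longleftrightarrow> destr_free a"
  "destr_free (Pair a b) \<longleftrightarrow> destr_free a \<and> destr_free b"
  "destr_free (Sign a b) \<longleftrightarrow> destr_free a \<and> destr_free b"
  "\<not> destr_free (Dec a b)" "\<not> destr_free (Deca a b)" "\<not> destr_free (Pi1 a)"
  "\<not> destr_free (Pi2 a)" "\<not> destr_free (Retrieve a)" "\<not> destr_free (Check a b d)"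
  by (subst destr_free_rec; simp add: is_destr_def)+

lemma destr_free_subterm: "destr_free t \<Longrightarrow> u \<in> subterms t \<Longrightarrow> destr_free u"
  by (auto simp: destr_free_def intro: subterms_trans)

lemma nf_if_destr_free: "destr_free t \<Longrightarrow> nf t"
  by (induction t) auto

definition term_hom :: "(msg \<Rightarrow> msg) \<Rightarrow> bool" where
  "term_hom f \<longleftrightarrow> (\<forall>t. \<not> leaf t \<longrightarrow> head (f t) = head t \<and> args (f t) = map f (args t))"

lemma term_homD:
  "term_hom f \<Longrightarrow> \<not> leaf t \<Longrightarrow> head (f t) = head t \<and> args (f t) = map f (args t)"
  by (auto simp: term_hom_def)

lemma term_hom_lmap: "term_hom (lmap g)"
  unfolding term_hom_def
proof (intro allI impI)
  show "head (lmap g t) = head t \<and> args (lmap g t) = map (lmap g) (args t)" if "\<not> leaf t" for t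
    using that by (cases t) auto
qed

lemma term_hom_comp: "term_hom f \<Longrightarrow> term_hom g \<Longrightarrow> term_hom (f \<circ> g)"
  unfolding term_hom_def by (metis comp_apply leaf_iff_head map_map)

lemma term_hom_funpow: "term_hom f \<Longrightarrow> term_hom (f ^^ k)"
proof (induction k)
  case 0
  then show ?case by (simp add: term_hom_def)
next
  case (Suc k)
  then have "term_hom (f \<circ> f ^^ k)" by (blast intro: term_hom_comp)
  then show ?case by (simp only: funpow.simps)
qed

lemma term_hom_simps:
  assumes "term_hom f"
  shows "f (Cst c) = Cst c" "f (Enc a b d) = Enc (f a) (f b) (f d)" "f (Dec a b) = Dec (f a) (f b)"
    "f (Enca a b d) = Enca (f a) (f b) (f d)" "f (Deca a b) = Deca (f a) (f b)"
    "f (Pub a) = Pub (f a)" "f (Priv a) = Priv (f a)" "f (Pair a b) = Pair (f a) (f b)"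
    "f (Pi1 a) = Pi1 (f a)" "f (Pi2 a) = Pi2 (f a)" "f (Sign a b) = Sign (f a) (f b)"
    "f (Check a b d) = Check (f a) (f b) (f d)" "f (Retrieve a) = Retrieve (f a)"
  by (rule msg_eqI; use term_homD[OF assms] in fastforce)+

lemma term_hom_eqI:
  assumes "term_hom f" "term_hom g" "\<And>n. f (Nm n) = g (Nm n)" "\<And>x. f (Vr x) = g (Vr x)"
  shows "f t = g t"
proof (induction t rule: msg_args_induct)
  case (args t)
  show ?case
  proof (cases "leaf t")
    case True
    then show ?thesis using assms by (cases rule: leafE) auto
  next
    case False
    then show ?thesis using term_homD[OF assms(1) False] term_homD[OF assms(2) False] args
      by (intro msg_eqI) auto
  qed
qed

lemma vars_term_hom:
  assumes "term_hom f" "\<And>n. vars (f (Nm n)) = {}"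
  shows "vars (f t) \<subseteq> (\<Union>x \<in> vars t. vars (f (Vr x)))"
proof (induction t rule: msg_args_induct)
  case (args t)
  show ?case
  proof (cases "leaf t")
    case True
    then show ?thesis using assms by (cases rule: leafE) auto
  next
    case False
    then have "\<not> leaf (f t)" using term_homD[OF assms(1) False] leaf_iff_head by metis
    then show ?thesis using term_homD[OF assms(1) False] args False
      by (auto simp: vars_nonleaf)
  qed
qed

lemma term_hom_sapp: "term_hom (sapp \<rho>)"
  unfolding sapp_def by (rule term_hom_lmap)

lemma sapp_simps [simp]:
  "sapp \<rho> (Nm n) = Nm n" "sapp \<rho> (Vr x) = (case \<rho> x of Some u \<Rightarrow> u | None \<Rightarrow> Vr x)"
  by (simp_all add: sapp_def)

lemma funpow_sapp_Nm [simp]: "(sapp \<rho> ^^ k) (Nm n) = Nm n"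
  by (induction k) auto

lemma funpow_sapp_Vr_notin: "x \<notin> dom \<rho> \<Longrightarrow> (sapp \<rho> ^^ k) (Vr x) = Vr x"
  by (induction k) (auto simp: domIff)

lemma sapp_id: "vars t \<inter> dom \<rho> = {} \<Longrightarrow> sapp \<rho> t = t"
proof (induction t rule: msg_args_induct)
  case (args t)
  show ?case
  proof (cases "leaf t")
    case True
    then show ?thesis using args.prems by (cases rule: leafE) (auto split: option.split)
  next
    case False
    then show ?thesis using term_homD[OF term_hom_sapp False] args
      by (intro msg_eqI) (auto simp: vars_nonleaf intro!: map_idI)
  qed
qed

lemma destr_free_sapp:
  "destr_free t \<Longrightarrow> (\<forall>U \<in> ran \<rho>. destr_free U) \<Longrightarrow> destr_free (sapp \<rho> t)"
proof (induction t rule: msg_args_induct)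
  case (args t)
  show ?case
  proof (cases "leaf t")
    case True
    then show ?thesis
      using args.prems(2) by (cases rule: leafE) (auto split: option.split intro: ranI)
  next
    case False
    then show ?thesis using args term_homD[OF term_hom_sapp False, of \<rho>]
      unfolding destr_free_rec[of "sapp \<rho> t"] destr_free_rec[of t] by (auto simp: is_destr_def)
  qed
qed

lemma fapp_eq: "fapp \<phi> = sapp (snd \<phi>) ^^ Suc (card (dom (snd \<phi>)))"
  by (rule ext) (simp only: fapp_def)

lemma term_hom_fapp: "term_hom (fapp \<phi>)"
  unfolding fapp_eq by (rule term_hom_funpow[OF term_hom_sapp])

lemma fapp_Nm [simp]: "fapp \<phi> (Nm n) = Nm n"
  by (simp add: fapp_eq)

definition repl :: "nat \<Rightarrow> msg \<Rightarrow> msg \<Rightarrow> msg" where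
  "repl s M = lmap (\<lambda>t. if t = Nm s then M else t)"

lemma term_hom_repl: "term_hom (repl s M)"
  unfolding repl_def by (rule term_hom_lmap)

lemma repl_simps [simp]:
  "repl s M (Nm n) = (if n = s then M else Nm n)" "repl s M (Vr x) = Vr x"
  by (simp_all add: repl_def)

lemma repl_id: "s \<notin> fn t \<Longrightarrow> repl s M t = t"
proof (induction t rule: msg_args_induct)
  case (args t)
  show ?case
  proof (cases "leaf t")
    case True
    then show ?thesis using args.prems by (cases rule: leafE) auto
  next
    case False
    then show ?thesis using term_homD[OF term_hom_repl False] args
      by (intro msg_eqI) (auto simp: fn_nonleaf intro!: map_idI)
  qed
qed

lemma repl_head_args:
  "t \<noteq> Nm s \<Longrightarrow> head (repl s M t) = head t \<and> args (repl s M t) = map (repl s M) (args t)"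
  by (cases "leaf t") (auto elim!: leafE dest: term_homD[OF term_hom_repl])

lemma repl_eq_constructorD:
  assumes "t \<noteq> Nm s"
  shows "repl s M t = Nm r \<Longrightarrow> t = Nm r"
    and "repl s M t = Enc x y z \<Longrightarrow> \<exists>a b c. t = Enc a b c \<and> repl s M c = z"
    and "repl s M t = Enca x y z \<Longrightarrow> \<exists>a b c. t = Enca a b c \<and> repl s M c = z"
  using assms by (cases t; auto simp: term_hom_simps[OF term_hom_repl] split: if_splits)+

lemma frame_repl_eq: "frame_repl \<phi> s M = (fst \<phi>, \<lambda>x. map_option (repl s M) (snd \<phi> x))"
  by (simp add: frame_repl_def repl_def)

lemma funpow_sapp_repl:
  assumes "closed M"
  shows "(sapp (\<lambda>x. map_option (repl s M) (\<rho> x)) ^^ k) (repl s M t) = repl s M ((sapp \<rho> ^^ k) t)"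
proof (induction k)
  case (Suc k)
  have "sapp (\<lambda>x. map_option (repl s M) (\<rho> x)) (repl s M u) = repl s M (sapp \<rho> u)" for u
    using term_hom_eqI[OF term_hom_comp[OF term_hom_sapp term_hom_repl]
        term_hom_comp[OF term_hom_repl term_hom_sapp]] assms
    by (auto simp: sapp_id closed_def split: option.split)
  with Suc show ?case by simp
qed simp

lemma fapp_frame_repl:
  assumes "closed M" "s \<notin> fn U"
  shows "fapp (frame_repl \<phi> s M) U = repl s M (fapp \<phi> U)"
proof -
  have "dom (\<lambda>x. map_option (repl s M) (snd \<phi> x)) = dom (snd \<phi>)"
    by (auto simp: dom_def)
  then have "fapp (frame_repl \<phi> s M) U =
      (sapp (\<lambda>x. map_option (repl s M) (snd \<phi> x)) ^^ Suc (card (dom (snd \<phi>)))) (repl s M U)"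
    unfolding fapp_eq frame_repl_eq repl_id[OF assms(2)] by simp
  then show ?thesis
    unfolding fapp_eq funpow_sapp_repl[OF assms(1)] .
qed

lemma eqE_repl: "eqE a b \<Longrightarrow> eqE (repl s M a) (repl s M b)"
proof (induction rule: eqE.induct)
  case (cong a b)
  show ?case
  proof (cases "leaf a")
    case True
    from True have "a = b" using cong.hyps(1) by (cases rule: leafE) (cases b; simp)+
    then show ?thesis by (simp add: eqE.refl)
  next
    case False
    then have "\<not> leaf b" using leaf_iff_head cong.hyps(1) by metis
    with False cong show ?thesis
      by (auto simp: term_homD[OF term_hom_repl] list_all2_map1 list_all2_map2
          intro!: eqE.cong elim: list_all2_mono)
  qed
qed (auto simp: term_hom_simps[OF term_hom_repl] intro: eqE.intros)

lemma eqE_repl_arg: "eqE M M' \<Longrightarrow> eqE (repl s M t) (repl s M' t)"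
proof (induction t rule: msg_args_induct)
  case (args t)
  show ?case
  proof (cases "leaf t")
    case True
    then show ?thesis using args.prems by (cases rule: leafE) (auto intro: eqE.refl)
  next
    case False
    then show ?thesis
      using term_homD[OF term_hom_repl False, of s M] term_homD[OF term_hom_repl False, of s M']
        args
      by (intro eqE.cong) (auto simp: list_all2_map1 list_all2_map2 intro: list.rel_refl_strong)
  qed
qed

lemma nf_repl_destr_free: "destr_free t \<Longrightarrow> nf M \<Longrightarrow> nf (repl s M t)"
  by (induction t) (auto simp: term_hom_simps[OF term_hom_repl])

lemma fst_frame_repl [simp]: "fst (frame_repl \<phi> s M) = fst \<phi>"
  by (simp add: frame_repl_def)

lemma dom_frame_repl [simp]: "dom (snd (frame_repl \<phi> s M)) = dom (snd \<phi>)"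
  by (auto simp: frame_repl_def dom_def)

lemma deduc_fapp_public:
  "public (fst \<phi>) U \<Longrightarrow> vars U \<subseteq> dom (snd \<phi>) \<Longrightarrow> deduc \<phi> (fapp \<phi> U)"
proof (induction U rule: msg_args_induct)
  case (args U)
  show ?case
  proof (cases "leaf U")
    case True
    then show ?thesis using args.prems by (cases rule: leafE) (auto intro: deduc.intros)
  next
    case False
    note hom = term_homD[OF term_hom_fapp False, of \<phi>]
    show ?thesis
    proof (rule d_fun)
      show "is_fun (fapp \<phi> U)" using hom False leaf_iff_head is_fun_iff_not_leaf by metis
      show "head (fapp \<phi> U) \<noteq> SPriv" using hom args.prems False by (simp add: public_nonleaf)
      show "\<forall>a \<in> set (args (fapp \<phi> U)). deduc \<phi> a"
        using hom args False by (auto simp: public_nonleaf vars_nonleaf)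
    qed
  qed
qed

lemma deduc_recipe:
  "deduc \<phi> t \<Longrightarrow> \<exists>U. public (fst \<phi>) U \<and> vars U \<subseteq> dom (snd \<phi>) \<and> eqE (fapp \<phi> U) t"
proof (induction rule: deduc.induct)
  case (d_frame x \<phi>)
  then show ?case by (intro exI[of _ "Vr x"]) (auto intro: eqE.refl)
next
  case (d_name m \<phi>)
  then show ?case by (auto intro!: exI[of _ "Nm m"] eqE.refl)
next
  case (d_fun t \<phi>)
  then obtain R where R: "\<forall>a \<in> set (args t).
      public (fst \<phi>) (R a) \<and> vars (R a) \<subseteq> dom (snd \<phi>) \<and> eqE (fapp \<phi> (R a)) a"
    by metis
  have "\<not> leaf t" using d_fun.hyps(1) is_fun_iff_not_leaf by blast
  then obtain U where U: "head U = head t" "args U = map R (args t)"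
    using exists_head_args[of t "map R (args t)"] by auto
  have "\<not> leaf U" using U \<open>\<not> leaf t\<close> leaf_iff_head by metis
  have "eqE (fapp \<phi> U) t"
    using term_homD[OF term_hom_fapp \<open>\<not> leaf U\<close>] U R
    by (intro eqE.cong) (auto simp: list_all2_map1 intro: list.rel_refl_strong)
  moreover have "public (fst \<phi>) U" "vars U \<subseteq> dom (snd \<phi>)"
    using U R \<open>\<not> leaf U\<close> d_fun.hyps(2) by (auto simp: public_nonleaf vars_nonleaf)
  ultimately show ?case by blast
next
  case (d_eq \<phi> t t')
  then show ?case by (blast intro: eqE.trans)
qed

lemma not_stat_eq_if_deduc:
  assumes "s \<in> fst \<phi>" "deduc \<phi> (Nm s)"
  shows "\<not> stat_eq (frame_repl \<phi> s (Cst ''a'')) (frame_repl \<phi> s (Cst ''b''))"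
proof
  assume eq: "stat_eq (frame_repl \<phi> s (Cst ''a'')) (frame_repl \<phi> s (Cst ''b''))"
  obtain U where U: "public (fst \<phi>) U" "vars U \<subseteq> dom (snd \<phi>)" "eqE (fapp \<phi> U) (Nm s)"
    using deduc_recipe[OF assms(2)] by blast
  have "s \<notin> fn U" using U(1) assms(1) by (auto simp: public_def)
  then have "eqE (fapp (frame_repl \<phi> s (Cst c)) U) (Cst c)" for c
    using eqE_repl[OF U(3), of s "Cst c"] fapp_frame_repl[OF closed_public_Cst(1)] by simp
  then have "passes (frame_repl \<phi> s (Cst c)) U (Cst ''a'') \<longleftrightarrow> eqE (Cst c) (Cst ''a'')" for c
    unfolding passes_def term_hom_simps(1)[OF term_hom_fapp] by (metis eqE.sym eqE.trans)
  moreover have "passes (frame_repl \<phi> s (Cst ''a'')) U (Cst ''a'') \<longleftrightarrow>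
      passes (frame_repl \<phi> s (Cst ''b'')) U (Cst ''a'')"
    using eq U closed_public_Cst by (simp add: stat_eq_def vars_nonleaf)
  ultimately show False by (simp add: eqE_iff_norm eqE.refl)
qed

section \<open>Names occurring outside encryptions\<close>

fun exposed :: "nat set \<Rightarrow> msg \<Rightarrow> bool" where
  "exposed A (Nm n) \<longleftrightarrow> n \<in> A" | "exposed A (Vr x) \<longleftrightarrow> False" | "exposed A (Cst c) \<longleftrightarrow> False"
| "exposed A (Enc a b c) \<longleftrightarrow> False" | "exposed A (Enca a b c) \<longleftrightarrow> False"
| "exposed A (Dec a b) \<longleftrightarrow> exposed A a \<or> exposed A b"
| "exposed A (Deca a b) \<longleftrightarrow> exposed A a \<or> exposed A b"
| "exposed A (Pub a) \<longleftrightarrow> exposed A a" | "exposed A (Priv a) \<longleftrightarrow> exposed A a"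
| "exposed A (Pair a b) \<longleftrightarrow> exposed A a \<or> exposed A b"
| "exposed A (Pi1 a) \<longleftrightarrow> exposed A a" | "exposed A (Pi2 a) \<longleftrightarrow> exposed A a"
| "exposed A (Sign a b) \<longleftrightarrow> exposed A a \<or> exposed A b"
| "exposed A (Check a b c) \<longleftrightarrow> exposed A a \<or> exposed A b \<or> exposed A c"
| "exposed A (Retrieve a) \<longleftrightarrow> exposed A a"

lemma exposed_nonleaf:
  "\<not> leaf t \<Longrightarrow> \<not> is_enc t \<Longrightarrow> exposed A t \<longleftrightarrow> (\<exists>a \<in> set (args t). exposed A a)"
  by (cases t) (auto simp: is_enc_def)

lemma not_exposed_enc: "is_enc t \<Longrightarrow> \<not> exposed A t"
  by (cases t) (auto simp: is_enc_def)

lemma exposed_Un: "exposed (A \<union> B) t \<longleftrightarrow> exposed A t \<or> exposed B t"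
  by (induction t) auto

lemma exposed_fn: "exposed A t \<Longrightarrow> \<exists>n \<in> A. n \<in> fn t"
  by (induction t) (auto simp: fn_nonleaf)

lemma exposed_position:
  "exposed A t \<Longrightarrow> \<exists>p n. subt t p = Some (Nm n) \<and> n \<in> A \<and>
     (\<forall>p1 p2 v. p = p1 @ p2 \<and> p2 \<noteq> [] \<and> subt t p1 = Some v \<longrightarrow> \<not> is_enc v)"
proof (induction t rule: msg_args_induct)
  case (args t)
  show ?case
  proof (cases "leaf t")
    case True
    then show ?thesis using args.prems by (cases rule: leafE) (auto intro!: exI[of _ "[]"])
  next
    case False
    then have "\<not> is_enc t" using args.prems not_exposed_enc by blast
    then obtain j where j: "j < length (args t)" "exposed A (args t ! j)"
      using exposed_nonleaf False args.prems by (metis in_set_conv_nth)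
    then obtain p n where p: "subt (args t ! j) p = Some (Nm n)" "n \<in> A"
      "\<forall>p1 p2 v. p = p1 @ p2 \<and> p2 \<noteq> [] \<and> subt (args t ! j) p1 = Some v \<longrightarrow> \<not> is_enc v"
      using args.IH nth_mem by blast
    have "\<not> is_enc v" if "Suc j # p = p1 @ p2" "p2 \<noteq> []" "subt t p1 = Some v" for p1 p2 v
      using that p(3) j(1) \<open>\<not> is_enc t\<close> by (cases p1) auto
    then show ?thesis using j p by (intro exI[of _ "Suc j # p"]) auto
  qed
qed

lemma exposed_term_hom:
  assumes "term_hom f" "\<And>n. f (Nm n) = Nm n" "exposed A (f t)"
  shows "exposed A t \<or> (\<exists>x \<in> vars t. exposed A (f (Vr x)))"
  using assms(3)
proof (induction t rule: msg_args_induct)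
  case (args t)
  show ?case
  proof (cases "leaf t")
    case True
    then show ?thesis using args.prems assms(2) by (cases rule: leafE) auto
  next
    case False
    note hom = term_homD[OF assms(1) False]
    then have "\<not> leaf (f t)" "\<not> is_enc t"
      using False leaf_iff_head args.prems not_exposed_enc by (metis is_enc_def)+
    then obtain a where "a \<in> set (args t)" "exposed A (f a)"
      using args.prems exposed_nonleaf hom by (auto simp: is_enc_def)
    then show ?thesis
      using args.IH exposed_nonleaf[OF False \<open>\<not> is_enc t\<close>] False by (fastforce simp: vars_nonleaf)
  qed
qed

lemma enc_subterm_term_hom:
  assumes "term_hom f" "\<And>n. f (Nm n) = Nm n" "u \<in> subterms (f t)" "is_enc u"
  shows "u \<in> f ` {e \<in> subterms t. is_enc e} \<or> (\<exists>x \<in> vars t. u \<in> subterms (f (Vr x)))"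
  using assms(3)
proof (induction t rule: msg_args_induct)
  case (args t)
  show ?case
  proof (cases "leaf t")
    case True
    then show ?thesis using args.prems assms(2,4)
      by (cases rule: leafE) (auto simp: subterms_leaf is_enc_def)
  next
    case False
    note hom = term_homD[OF assms(1) False]
    from args.prems consider "u = f t" | a where "a \<in> set (args t)" "u \<in> subterms (f a)"
      using hom by (subst (asm) subterms_rec) auto
    then show ?thesis
    proof cases
      case 1
      then show ?thesis using hom assms(4) by (auto simp: is_enc_def)
    next
      case 2
      then show ?thesis
        using args.IH subterms_arg False by (fastforce simp: vars_nonleaf)
    qed
  qed
qed

locale well_formed_frame =
  fixes \<phi> :: frame and s :: nat
  assumes frame: "is_frame \<phi>" and restricted: "s \<in> fst \<phi>" and well_formed: "well_formed \<phi> s"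
begin

abbreviation \<sigma> :: "nat \<rightharpoonup> msg" where
  "\<sigma> \<equiv> snd \<phi>"

abbreviation F :: "msg \<Rightarrow> msg" where
  "F \<equiv> fapp \<phi>"

lemma enc_agent_prob:
  "U \<in> ran \<sigma> \<Longrightarrow> subt U q = Some u \<Longrightarrow> is_enc u \<Longrightarrow>
    agent_enc (fst \<phi> - {s}) U q \<and> prob_enc (ran \<sigma>) U q"
  using well_formed unfolding well_formed_def by blast

lemma key_ok_subterm: "U \<in> ran \<sigma> \<Longrightarrow> u \<in> subterms U \<Longrightarrow> key_ok s u"
  using well_formed unfolding well_formed_def by blast

lemma destr_free_ran: "U \<in> ran \<sigma> \<Longrightarrow> destr_free U"
  using well_formed unfolding well_formed_def destr_free_def by blast

lemma the_in_ran: "x \<in> dom \<sigma> \<Longrightarrow> the (\<sigma> x) \<in> ran \<sigma>"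
  by (auto simp: ran_def dom_def)

definition dep :: "(nat \<times> nat) set" where
  "dep = {(x, y). y \<in> dom \<sigma> \<and> x \<in> vars (the (\<sigma> y))}"

lemma finite_dom: "finite (dom \<sigma>)"
  using frame by (simp add: is_frame_def)

lemma wf_dep: "wf dep"
proof (rule finite_acyclic_wf)
  have "dep \<subseteq> (\<Union>y \<in> dom \<sigma>. vars (the (\<sigma> y))) \<times> dom \<sigma>"
    by (auto simp: dep_def)
  then show "finite dep"
    using finite_dom finite_vars by (meson finite_SigmaI finite_UN_I finite_subset)
  show "acyclic dep"
    using frame by (simp add: is_frame_def acyclic_subst_def dep_def)
qed

text \<open>depth x bounds the dependency chains below x; as depth x \<le> card (dom \<sigma>), the
card (dom \<sigma>) + 1 rounds of substitution performed by fapp eliminate all variables of the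
domain.\<close>

definition depth :: "nat \<Rightarrow> nat" where
  "depth x = card ({y. (y, x) \<in> dep\<^sup>+} \<inter> dom \<sigma>)"

lemma depth_less: "(z, x) \<in> dep \<Longrightarrow> z \<in> dom \<sigma> \<Longrightarrow> depth z < depth x"
  unfolding depth_def
proof (rule psubset_card_mono)
  assume "(z, x) \<in> dep" "z \<in> dom \<sigma>"
  moreover have "(z, z) \<notin> dep\<^sup>+"
    using wf_dep wf_acyclic by (auto simp: acyclic_def)
  ultimately show "{y. (y, z) \<in> dep\<^sup>+} \<inter> dom \<sigma> \<subset> {y. (y, x) \<in> dep\<^sup>+} \<inter> dom \<sigma>"
    by (auto intro: trancl_into_trancl)
qed (simp add: finite_dom)

lemma depth_le_card: "depth x \<le> card (dom \<sigma>)"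
  unfolding depth_def by (rule card_mono[OF finite_dom]) auto

lemma vars_funpow_sapp_Vr:
  "depth x \<le> k \<Longrightarrow> vars ((sapp \<sigma> ^^ Suc k) (Vr x)) \<inter> dom \<sigma> = {}"
proof (induction x arbitrary: k rule: wf_induct_rule[OF wf_dep])
  case (1 x)
  show ?case
  proof (cases "x \<in> dom \<sigma>")
    case False
    then show ?thesis using funpow_sapp_Vr_notin[of x \<sigma> "Suc k"] by simp
  next
    case True
    then have "(sapp \<sigma> ^^ Suc k) (Vr x) = (sapp \<sigma> ^^ k) (the (\<sigma> x))"
      by (auto simp: funpow_Suc_right domIff simp del: funpow.simps)
    moreover have "vars ((sapp \<sigma> ^^ k) (Vr z)) \<inter> dom \<sigma> = {}" if "z \<in> vars (the (\<sigma> x))" for z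
    proof (cases "z \<in> dom \<sigma>")
      case False
      then show ?thesis using funpow_sapp_Vr_notin[of z \<sigma> k] by simp
    next
      case True
      have "(z, x) \<in> dep" using that \<open>x \<in> dom \<sigma>\<close> by (simp add: dep_def)
      moreover obtain k' where "k = Suc k'" "depth z \<le> k'"
        using depth_less[OF \<open>(z, x) \<in> dep\<close> True] "1.prems" by (cases k) auto
      ultimately show ?thesis using "1.IH" by blast
    qed
    ultimately show ?thesis
      using vars_term_hom[OF term_hom_funpow[OF term_hom_sapp], where t = "the (\<sigma> x)"] by fastforce
  qed
qed

lemma F_Vr: "x \<in> dom \<sigma> \<Longrightarrow> F (Vr x) = F (the (\<sigma> x))"
proof -
  assume x: "x \<in> dom \<sigma>"
  have "vars (F (Vr x)) \<inter> dom \<sigma> = {}"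
    unfolding fapp_eq by (rule vars_funpow_sapp_Vr[OF depth_le_card])
  then have "F (Vr x) = sapp \<sigma> (F (Vr x))"
    by (simp add: sapp_id)
  also have "\<dots> = F (sapp \<sigma> (Vr x))"
    unfolding fapp_eq by (simp only: funpow_swap1)
  finally show ?thesis
    using x by (auto simp: domIff)
qed

lemma F_Vr_notin: "x \<notin> dom \<sigma> \<Longrightarrow> F (Vr x) = Vr x"
  unfolding fapp_eq by (rule funpow_sapp_Vr_notin)

lemma destr_free_F:
  assumes "destr_free t"
  shows "destr_free (F t)"
proof -
  have "destr_free ((sapp \<sigma> ^^ k) t)" for k
    by (induction k) (use assms destr_free_ran destr_free_sapp in auto)
  then show ?thesis
    unfolding fapp_eq .
qed

lemma exposed_F_Vr: "exposed A (F (Vr x)) \<Longrightarrow> \<exists>z \<in> dom \<sigma>. exposed A (the (\<sigma> z))"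
proof (induction x rule: wf_induct_rule[OF wf_dep])
  case (1 x)
  show ?case
  proof (cases "x \<in> dom \<sigma>")
    case False
    then show ?thesis using "1.prems" F_Vr_notin by simp
  next
    case True
    then have "exposed A (F (the (\<sigma> x)))" using "1.prems" F_Vr by simp
    then have "exposed A (the (\<sigma> x)) \<or> (\<exists>y \<in> vars (the (\<sigma> x)). exposed A (F (Vr y)))"
      by (rule exposed_term_hom[OF term_hom_fapp fapp_Nm])
    then show ?thesis using "1.IH" True by (auto simp: dep_def)
  qed
qed

lemma exposed_F: "exposed A (F t) \<Longrightarrow> exposed A t \<or> (\<exists>z \<in> dom \<sigma>. exposed A (the (\<sigma> z)))"
  using exposed_term_hom[OF term_hom_fapp fapp_Nm] exposed_F_Vr by blast

definition rand :: "nat set" where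
  "rand = {r. \<exists>U \<in> ran \<sigma>. \<exists>q u. subt U q = Some u \<and> is_enc u \<and> subt U (q @ [3]) = Some (Nm r)}"

lemma rand_subset: "rand \<subseteq> fst \<phi> - {s}"
proof
  fix r assume "r \<in> rand"
  then obtain U q u where
    "U \<in> ran \<sigma>" "subt U q = Some u" "is_enc u" "subt U (q @ [3]) = Some (Nm r)"
    by (auto simp: rand_def)
  then show "r \<in> fst \<phi> - {s}"
    using enc_agent_prob by (fastforce simp: agent_enc_def)
qed

definition frame_encs :: "msg set" where
  "frame_encs = F ` {e. \<exists>U \<in> ran \<sigma>. e \<in> subterms U \<and> is_enc e}"

lemma frame_enc_subterm_cases:
  assumes "U \<in> ran \<sigma>" "subt U q = Some e" "is_enc e"
  obtains m k r where "r \<in> rand" "subt U (q @ [3]) = Some (Nm r)"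
    "e = Enc m k (Nm r) \<or> e = Enca m k (Nm r)"
proof -
  obtain r where r: "subt U (q @ [3]) = Some (Nm r)"
    using enc_agent_prob[OF assms] by (auto simp: agent_enc_def)
  then have "r \<in> rand" using assms by (auto simp: rand_def)
  moreover have "subt e [3] = Some (Nm r)" using r assms(2) by (simp add: subt_append)
  ultimately show ?thesis
    using that r assms(3) by (cases e) (auto simp: is_enc_def)
qed

lemma frame_encsE:
  assumes "E \<in> frame_encs"
  obtains U q m k r where "U \<in> ran \<sigma>" "r \<in> rand" "subt U (q @ [3]) = Some (Nm r)"
    "subt U q = Some (Enc m k (Nm r)) \<and> E = Enc (F m) (F k) (Nm r)
     \<or> subt U q = Some (Enca m k (Nm r)) \<and> E = Enca (F m) (F k) (Nm r)"
proof -
  obtain U q e where e: "U \<in> ran \<sigma>" "subt U q = Some e" "is_enc e" "E = F e"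
    using assms by (auto simp: frame_encs_def subterms_def)
  then obtain m k r where "r \<in> rand" "subt U (q @ [3]) = Some (Nm r)"
    "e = Enc m k (Nm r) \<or> e = Enca m k (Nm r)"
    by (blast elim: frame_enc_subterm_cases)
  with e show ?thesis
    using that[of U r q m k] by (auto simp: term_hom_simps[OF term_hom_fapp])
qed

lemma frame_encs_rand:
  "E \<in> frame_encs \<Longrightarrow> \<exists>a b r. r \<in> rand \<and> (E = Enc a b (Nm r) \<or> E = Enca a b (Nm r))"
  by (erule frame_encsE) blast

lemma is_enc_frame_encs: "E \<in> frame_encs \<Longrightarrow> is_enc E"
  by (auto simp: is_enc_def dest!: frame_encs_rand)

lemma destr_free_frame_encs: "E \<in> frame_encs \<Longrightarrow> destr_free E"
  unfolding frame_encs_def by (blast intro: destr_free_F destr_free_subterm destr_free_ran)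

text \<open>Frame encryptions are probabilistic, so they are determined by their random name.\<close>

lemma frame_encs_eq:
  assumes "E1 \<in> frame_encs" "E2 \<in> frame_encs" "args E1 ! 2 = args E2 ! 2"
  shows "E1 = E2"
proof -
  obtain U1 q1 m1 k1 r1 where 1: "U1 \<in> ran \<sigma>" "subt U1 (q1 @ [3]) = Some (Nm r1)"
    "subt U1 q1 = Some (Enc m1 k1 (Nm r1)) \<and> E1 = Enc (F m1) (F k1) (Nm r1)
     \<or> subt U1 q1 = Some (Enca m1 k1 (Nm r1)) \<and> E1 = Enca (F m1) (F k1) (Nm r1)"
    using assms(1) by (rule frame_encsE)
  obtain U2 q2 m2 k2 r2 where 2: "U2 \<in> ran \<sigma>" "subt U2 (q2 @ [3]) = Some (Nm r2)"
    "subt U2 q2 = Some (Enc m2 k2 (Nm r2)) \<and> E2 = Enc (F m2) (F k2) (Nm r2)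
     \<or> subt U2 q2 = Some (Enca m2 k2 (Nm r2)) \<and> E2 = Enca (F m2) (F k2) (Nm r2)"
    using assms(2) by (rule frame_encsE)
  have "r1 = r2" using assms(3) 1(3) 2(3) by auto
  obtain e1 where e1: "subt U1 q1 = Some e1" "is_enc e1" using 1(3) by (auto simp: is_enc_def)
  then have "prob_enc (ran \<sigma>) U1 q1" using enc_agent_prob[OF 1(1)] by blast
  then have "subt U2 q2 = subt U1 q1"
    using 1(2) 2(1,2) \<open>r1 = r2\<close> unfolding prob_enc_def by fastforce
  then show ?thesis using 1(3) 2(3) by auto
qed

lemma enc_subterm_F_Vr: "u \<in> subterms (F (Vr x)) \<Longrightarrow> is_enc u \<Longrightarrow> u \<in> frame_encs"
proof (induction x arbitrary: u rule: wf_induct_rule[OF wf_dep])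
  case (1 x)
  show ?case
  proof (cases "x \<in> dom \<sigma>")
    case False
    then show ?thesis using "1.prems" F_Vr_notin by (simp add: subterms_leaf is_enc_def)
  next
    case True
    then have "u \<in> subterms (F (the (\<sigma> x)))" using "1.prems"(1) F_Vr by simp
    then have "u \<in> F ` {e \<in> subterms (the (\<sigma> x)). is_enc e}
        \<or> (\<exists>y \<in> vars (the (\<sigma> x)). u \<in> subterms (F (Vr y)))"
      using enc_subterm_term_hom[OF term_hom_fapp fapp_Nm] "1.prems"(2) by blast
    moreover have "F ` {e \<in> subterms (the (\<sigma> x)). is_enc e} \<subseteq> frame_encs"
      using the_in_ran[OF True] by (auto simp: frame_encs_def)
    moreover have "(y, x) \<in> dep" if "y \<in> vars (the (\<sigma> x))" for y
      using that True by (simp add: dep_def)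
    ultimately show ?thesis
      using "1.IH" "1.prems"(2) by blast
  qed
qed

lemma enc_subterm_F:
  "u \<in> subterms (F t) \<Longrightarrow> is_enc u \<Longrightarrow> u \<in> F ` {e \<in> subterms t. is_enc e} \<or> u \<in> frame_encs"
  using enc_subterm_term_hom[OF term_hom_fapp fapp_Nm] enc_subterm_F_Vr by blast

text \<open>Since encryptions of the frame are probabilistic, their random names occur in the frame
only in randomness positions.\<close>

lemma exposed_rand_position:
  assumes "U \<in> ran \<sigma>" "subt U p = Some u" "exposed rand u"
  shows "\<exists>q. p = q @ [3]"
proof -
  obtain w n where w: "subt u w = Some (Nm n)" "n \<in> rand"
     "\<forall>w1 w2 v. w = w1 @ w2 \<and> w2 \<noteq> [] \<and> subt u w1 = Some v \<longrightarrow> \<not> is_enc v"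
    using exposed_position[OF assms(3)] by blast
  obtain U' q e where e: "U' \<in> ran \<sigma>" "subt U' q = Some e" "is_enc e"
    "subt U' (q @ [3]) = Some (Nm n)"
    using w(2) by (auto simp: rand_def)
  have "subt U (p @ w) = Some (Nm n)" using assms(2) w(1) by (simp add: subt_append)
  then obtain q' where q': "p @ w = q' @ [3]" "subt U q' = Some e"
    using enc_agent_prob[OF e(1-3)] assms(1) e(2,4) unfolding prob_enc_def by fastforce
  show ?thesis
  proof (cases w rule: rev_exhaust)
    case Nil
    then show ?thesis using q' by auto
  next
    case (snoc w' i)
    then have "w = w' @ [3]" "q' = p @ w'" using q'(1) by auto
    moreover have "subt u w' = Some e" using q'(2) assms(2) \<open>q' = p @ w'\<close> by (simp add: subt_append)
    ultimately show ?thesis using w(3) e(3) by blast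
  qed
qed

lemma deduc_secret_if_exposed:
  assumes "U \<in> ran \<sigma>"
  shows "u \<in> subterms U \<Longrightarrow> exposed {s} u \<Longrightarrow> deduc \<phi> (F u) \<Longrightarrow> deduc \<phi> (Nm s)"
proof (induction u)
  case (Pair a b)
  have "deduc \<phi> (Pi1 (Pair (F a) (F b)))" "deduc \<phi> (Pi2 (Pair (F a) (F b)))"
    using Pair.prems(3) by (intro d_fun; simp add: is_fun_def term_hom_simps[OF term_hom_fapp])+
  then have "deduc \<phi> (F a)" "deduc \<phi> (F b)"
    by (blast intro: d_eq eqE.intros)+
  moreover have "a \<in> subterms U" "b \<in> subterms U"
    using subterms_trans[OF Pair.prems(1) arg_in_subterms] by simp_all
  ultimately show ?case using Pair by auto
next
  case (Sign a b)
  then have "key_ok s (Sign a b)" using key_ok_subterm[OF assms] by blast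
  then have "exposed {s} a" using Sign.prems(2) exposed_fn[of "{s}" b] by (auto simp: key_ok_def)
  have "deduc \<phi> (Retrieve (Sign (F a) (F b)))"
    using Sign.prems(3) by (intro d_fun) (simp_all add: is_fun_def term_hom_simps[OF term_hom_fapp])
  then have "deduc \<phi> (F a)" by (blast intro: d_eq eqE.intros)
  moreover have "a \<in> subterms U"
    using subterms_trans[OF Sign.prems(1) arg_in_subterms] by simp
  ultimately show ?case using Sign.IH \<open>exposed {s} a\<close> by blast
next
  case (Pub a)
  then have "key_ok s (Pub a)" using key_ok_subterm[OF assms] by blast
  then show ?case using Pub.prems(2) exposed_fn[of "{s}" a] by (auto simp: key_ok_def)
next
  case (Priv a)
  then have "key_ok s (Priv a)" using key_ok_subterm[OF assms] by blast
  then show ?case using Priv.prems(2) exposed_fn[of "{s}" a] by (auto simp: key_ok_def)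
qed (auto dest!: destr_free_subterm[OF destr_free_ran[OF assms]])

definition rand_enc :: "msg \<Rightarrow> bool" where
  "rand_enc t \<longleftrightarrow> (\<exists>a b r. r \<in> rand \<and> (t = Enc a b (Nm r) \<or> t = Enca a b (Nm r)))"

text \<open>In a good term, s and the random names of the frame occur only inside frame encryptions,
and no other encryption uses such a random name.\<close>

inductive good :: "msg \<Rightarrow> bool" where
  frame_enc: "t \<in> frame_encs \<Longrightarrow> good t"
| step: "t \<notin> Nm ` insert s rand \<Longrightarrow> \<not> rand_enc t \<Longrightarrow> (\<forall>a \<in> set (args t). good a) \<Longrightarrow> good t"

lemma good_not_Nm: "good t \<Longrightarrow> t \<notin> Nm ` insert s rand"
  by (induction rule: good.induct) (auto dest: is_enc_frame_encs simp: is_enc_def)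

lemma good_not_secret: "good t \<Longrightarrow> t \<noteq> Nm s"
  using good_not_Nm by blast

lemma good_not_frame_encD:
  "good t \<Longrightarrow> t \<notin> frame_encs \<Longrightarrow>
    t \<notin> Nm ` insert s rand \<and> \<not> rand_enc t \<and> (\<forall>a \<in> set (args t). good a)"
  by (cases rule: good.cases) auto

lemma good_arg: "good t \<Longrightarrow> \<not> is_enc t \<Longrightarrow> a \<in> set (args t) \<Longrightarrow> good a"
  using good_not_frame_encD is_enc_frame_encs by blast

lemma good_nonleafI:
  "\<not> leaf t \<Longrightarrow> \<not> rand_enc t \<Longrightarrow> (\<forall>a \<in> set (args t). good a) \<Longrightarrow> good t"
  by (rule good.step) (auto simp: leaf_def)

lemma good_not_encI: "\<not> leaf t \<Longrightarrow> \<not> is_enc t \<Longrightarrow> (\<forall>a \<in> set (args t). good a) \<Longrightarrow> good t"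
  by (rule good_nonleafI) (auto simp: rand_enc_def is_enc_def)

lemma good_if_encs_unexposed:
  "(\<forall>u \<in> subterms t. is_enc u \<longrightarrow> u \<in> frame_encs) \<Longrightarrow> \<not> exposed (insert s rand) t \<Longrightarrow> good t"
proof (induction t rule: msg_args_induct)
  case (args t)
  show ?case
  proof (cases "is_enc t")
    case True
    then show ?thesis using args.prems(1) by (auto intro: good.frame_enc)
  next
    case False
    have "good a" if a: "a \<in> set (args t)" for a
    proof -
      have "\<not> leaf t" using a leaf_args by fastforce
      then have "\<not> exposed (insert s rand) a"
        using args.prems(2) exposed_nonleaf[OF _ False] a by blast
      then show ?thesis
        using args.IH[OF a] args.prems(1) subterms_arg[OF a] by blast
    qed
    with False args.prems(2) show ?thesis
      by (intro good.step) (auto simp: rand_enc_def is_enc_def)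
  qed
qed

lemma repl_ne_frame_enc:
  assumes "E \<in> frame_encs" "good y" "y \<notin> frame_encs"
  shows "repl s M y \<noteq> repl s M E"
proof
  assume eq: "repl s M y = repl s M E"
  obtain a b r where r: "r \<in> rand" "E = Enc a b (Nm r) \<or> E = Enca a b (Nm r)"
    using frame_encs_rand[OF assms(1)] by blast
  have "r \<noteq> s" using r(1) rand_subset by blast
  have y: "y \<noteq> Nm s" "\<not> rand_enc y" "\<forall>a \<in> set (args y). good a"
    using good_not_frame_encD[OF assms(2,3)] by auto
  from r(2) have "\<exists>y1 y2 y3. (y = Enc y1 y2 y3 \<or> y = Enca y1 y2 y3) \<and> repl s M y3 = Nm r"
  proof
    assume "E = Enc a b (Nm r)"
    then have "repl s M y = Enc (repl s M a) (repl s M b) (Nm r)"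
      using eq \<open>r \<noteq> s\<close> by (simp add: term_hom_simps[OF term_hom_repl])
    then show ?thesis using repl_eq_constructorD(2)[OF y(1)] by blast
  next
    assume "E = Enca a b (Nm r)"
    then have "repl s M y = Enca (repl s M a) (repl s M b) (Nm r)"
      using eq \<open>r \<noteq> s\<close> by (simp add: term_hom_simps[OF term_hom_repl])
    then show ?thesis using repl_eq_constructorD(3)[OF y(1)] by blast
  qed
  then obtain y1 y2 y3 where y3: "y = Enc y1 y2 y3 \<or> y = Enca y1 y2 y3" "repl s M y3 = Nm r"
    by blast
  then have "good y3" using y(3) by auto
  then have "y3 = Nm r" using y3(2) repl_eq_constructorD(1) good_not_secret by blast
  then show False using y(2) y3(1) r(1) by (auto simp: rand_enc_def)
qed

lemma repl_frame_encs_inj: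
  assumes "E1 \<in> frame_encs" "E2 \<in> frame_encs" "repl s M E1 = repl s M E2"
  shows "E1 = E2"
proof (rule frame_encs_eq[OF assms(1,2)])
  obtain a b r where "r \<in> rand" "E1 = Enc a b (Nm r) \<or> E1 = Enca a b (Nm r)"
    using frame_encs_rand[OF assms(1)] by blast
  moreover obtain a' b' r' where "r' \<in> rand" "E2 = Enc a' b' (Nm r') \<or> E2 = Enca a' b' (Nm r')"
    using frame_encs_rand[OF assms(2)] by blast
  moreover have "r \<noteq> s" "r' \<noteq> s" using calculation rand_subset by blast+
  ultimately show "args E1 ! 2 = args E2 ! 2"
    using assms(3) by (auto simp: term_hom_simps[OF term_hom_repl])
qed

lemma good_repl_inj: "good x \<Longrightarrow> good y \<Longrightarrow> repl s M x = repl s M y \<Longrightarrow> x = y"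
proof (induction x arbitrary: y rule: msg_args_induct)
  case (args x)
  consider "x \<in> frame_encs" "y \<in> frame_encs" | "x \<in> frame_encs \<longleftrightarrow> y \<notin> frame_encs"
    | "x \<notin> frame_encs" "y \<notin> frame_encs"
    by blast
  then show ?case
  proof cases
    case 1
    then show ?thesis using repl_frame_encs_inj args.prems(3) by blast
  next
    case 2
    then show ?thesis using repl_ne_frame_enc args.prems by metis
  next
    case 3
    have good_args: "\<forall>a \<in> set (args x). good a" "\<forall>a \<in> set (args y). good a"
      using good_not_frame_encD args.prems(1,2) 3 by blast+
    have "head x = head y" "map (repl s M) (args x) = map (repl s M) (args y)"
      using repl_head_args[OF good_not_secret[OF args.prems(1)], of M]
        repl_head_args[OF good_not_secret[OF args.prems(2)], of M] args.prems(3) by auto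
    moreover have "args x = args y"
    proof (rule nth_equalityI)
      show "length (args x) = length (args y)"
        using map_eq_imp_length_eq[OF calculation(2)] .
      fix i assume "i < length (args x)"
      then show "args x ! i = args y ! i"
        using args.IH good_args calculation(2) \<open>length (args x) = length (args y)\<close>
        by (metis nth_map nth_mem)
    qed
    ultimately show ?thesis
      by (blast intro: msg_eqI)
  qed
qed

end

section \<open>Replacing a non-deducible secret\<close>

locale secret_frame = well_formed_frame +
  assumes secret: "\<not> deduc \<phi> (Nm s)"
begin

lemma not_exposed_frame_term: "z \<in> dom \<sigma> \<Longrightarrow> \<not> exposed (insert s rand) (the (\<sigma> z))"
proof
  assume z: "z \<in> dom \<sigma>" and "exposed (insert s rand) (the (\<sigma> z))"
  then consider "exposed {s} (the (\<sigma> z))" | "exposed rand (the (\<sigma> z))"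
    using exposed_Un[of "{s}" rand] by auto
  then show False
  proof cases
    case 1
    moreover have "deduc \<phi> (F (the (\<sigma> z)))" using d_frame[of z \<phi>] z F_Vr by simp
    ultimately show False
      using deduc_secret_if_exposed[OF the_in_ran[OF z] subterms_self] secret by blast
  next
    case 2
    then show False using exposed_rand_position[OF the_in_ran[OF z], of "[]"] by simp
  qed
qed

lemma good_F_subterm:
  assumes "U \<in> ran \<sigma>" "subt U p = Some u" "\<forall>q. p \<noteq> q @ [3]" "\<not> exposed {s} u"
  shows "good (F u)"
proof (rule good_if_encs_unexposed)
  show "\<forall>v \<in> subterms (F u). is_enc v \<longrightarrow> v \<in> frame_encs"
    using enc_subterm_F subterms_trans[OF subterms_subt[OF assms(2)]] assms(1)
    by (fastforce simp: frame_encs_def)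
  have "\<not> exposed rand u"
    using exposed_rand_position[OF assms(1,2)] assms(3) by blast
  then have "\<not> exposed (insert s rand) u"
    using assms(4) exposed_Un[of "{s}" rand] by simp
  then show "\<not> exposed (insert s rand) (F u)"
    using exposed_F not_exposed_frame_term by blast
qed

lemma good_F_Vr: "x \<in> dom \<sigma> \<Longrightarrow> good (F (Vr x))"
  using good_F_subterm[OF the_in_ran, of x "[]"] not_exposed_frame_term[of x]
    exposed_Un[of "{s}" rand] F_Vr by simp

lemma good_frame_enc_args:
  assumes "E \<in> frame_encs" "E = Enc a k c \<or> E = Enca a k c"
  shows "good k" and "deduc \<phi> a \<Longrightarrow> good a"
proof -
  obtain U q m k' r where U: "U \<in> ran \<sigma>"
    "subt U q = Some (Enc m k' (Nm r)) \<and> E = Enc (F m) (F k') (Nm r)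
     \<or> subt U q = Some (Enca m k' (Nm r)) \<and> E = Enca (F m) (F k') (Nm r)"
    using assms(1) by (rule frame_encsE)
  then have pos: "subt U (q @ [1]) = Some m" "subt U (q @ [2]) = Some k'"
    by (auto simp: subt_append)
  have "key_ok s (Enc m k' (Nm r)) \<or> key_ok s (Enca m k' (Nm r))"
    using U key_ok_subterm subterms_subt by blast
  then have "\<not> exposed {s} k'"
    using exposed_fn[of "{s}" k'] by (auto simp: key_ok_def)
  then show "good k"
    using good_F_subterm[OF U(1) pos(2)] U(2) assms(2) by auto
  assume "deduc \<phi> a"
  then have "\<not> exposed {s} m"
    using deduc_secret_if_exposed[OF U(1) subterms_subt[OF pos(1)]] secret U(2) assms(2) by auto
  then show "good a"
    using good_F_subterm[OF U(1) pos(1)] U(2) assms(2) by auto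
qed

lemma good_enc_args:
  assumes "good t" "t = Enc a k c \<or> t = Enca a k c"
  shows "good k" and "deduc \<phi> a \<Longrightarrow> good a"
  using assms good_frame_enc_args[OF _ assms(2)] good_not_frame_encD[OF assms(1)]
  by (cases "t \<in> frame_encs"; auto)+

lemma good_repl_eqD:
  assumes "good t"
  shows "repl s M t = Pair x y \<Longrightarrow> \<exists>a b. t = Pair a b"
    and "repl s M t = Sign x y \<Longrightarrow>
      \<exists>a b. t = Sign a b \<and> good a \<and> good b \<and> repl s M a = x \<and> repl s M b = y"
    and "repl s M t = Pub x \<Longrightarrow> \<exists>a. t = Pub a \<and> good a \<and> repl s M a = x"
    and "repl s M t = Priv x \<Longrightarrow> \<exists>a. t = Priv a \<and> good a \<and> repl s M a = x"
    and "repl s M t = Enc x y z \<Longrightarrow> \<exists>a b c. t = Enc a b c \<and> good b \<and> repl s M b = y"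
    and "repl s M t = Enca x y z \<Longrightarrow> \<exists>a b c. t = Enca a b c \<and> good b \<and> repl s M b = y"
  using good_not_secret[OF assms] good_arg[OF assms] good_enc_args(1)[OF assms]
  by (cases t; auto simp: term_hom_simps[OF term_hom_repl] is_enc_def split: if_splits)+

lemma root_redex_repl_good_Deca:
  assumes "good a" "good k" "root_redex (Deca (repl s M a) (repl s M k))"
  shows "root_redex (Deca a k)"
proof -
  obtain x w c where "repl s M a = Enca x (Pub w) c" "repl s M k = Priv w"
    using assms(3) by auto
  obtain a1 a2 a3 where a: "a = Enca a1 a2 a3" "good a2" "repl s M a2 = Pub w"
    using good_repl_eqD(6)[OF assms(1) \<open>repl s M a = Enca x (Pub w) c\<close>] by blast
  obtain b where b: "a2 = Pub b" "good b" "repl s M b = w"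
    using good_repl_eqD(3)[OF a(2,3)] by blast
  obtain k' where k: "k = Priv k'" "good k'" "repl s M k' = w"
    using good_repl_eqD(4)[OF assms(2) \<open>repl s M k = Priv w\<close>] by blast
  have "b = k'" using good_repl_inj[OF b(2) k(2), of M] b(3) k(3) by simp
  then show ?thesis using a b k by auto
qed

lemma root_redex_repl_good_Check:
  assumes "good a" "good b" "good c" "root_redex (Check (repl s M a) (repl s M b) (repl s M c))"
  shows "root_redex (Check a b c)"
proof -
  obtain w where "repl s M b = Sign (repl s M a) (Priv w)" "repl s M c = Pub w"
    using assms(4) by auto
  then obtain b1 b2 where b: "b = Sign b1 b2" "good b1" "good b2"
    "repl s M b1 = repl s M a" "repl s M b2 = Priv w"
    using good_repl_eqD(2)[OF assms(2)] by blast
  obtain w' where w': "b2 = Priv w'" "good w'" "repl s M w' = w"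
    using good_repl_eqD(4)[OF b(3,5)] by blast
  obtain c' where c': "c = Pub c'" "good c'" "repl s M c' = w"
    using good_repl_eqD(3)[OF assms(3) \<open>repl s M c = Pub w\<close>] by blast
  have "b1 = a" "c' = w'"
    using good_repl_inj[OF b(2) assms(1) b(4)] good_repl_inj[OF c'(2) w'(2), of M] c'(3) w'(3)
    by simp_all
  then show ?thesis using b w' c' by auto
qed

lemma root_redex_repl_good:
  assumes "good t" "root_redex (repl s M t)"
  shows "root_redex t"
proof -
  have args: "\<forall>a \<in> set (args t). good a" if "\<not> is_enc t"
    using good_arg[OF assms(1) that] by blast
  note repl_simps = term_hom_simps[OF term_hom_repl]
  show ?thesis
  proof (cases t)
    case (Pi1 a)
    then have "good a" using args by (simp add: is_enc_def)
    with Pi1 assms(2) show ?thesis using good_repl_eqD(1) by (fastforce simp: repl_simps)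
  next
    case (Pi2 a)
    then have "good a" using args by (simp add: is_enc_def)
    with Pi2 assms(2) show ?thesis using good_repl_eqD(1) by (fastforce simp: repl_simps)
  next
    case (Retrieve a)
    then have "good a" using args by (simp add: is_enc_def)
    with Retrieve assms(2) show ?thesis using good_repl_eqD(2) by (fastforce simp: repl_simps)
  next
    case (Dec a k)
    then have a: "good a" and k: "good k" using args by (auto simp: is_enc_def)
    obtain x c where "repl s M a = Enc x (repl s M k) c"
      using assms(2) Dec by (auto simp: repl_simps)
    then obtain a1 a2 a3 where "a = Enc a1 a2 a3" "good a2" "repl s M a2 = repl s M k"
      using good_repl_eqD(5)[OF a] by blast
    then show ?thesis using Dec good_repl_inj[OF \<open>good a2\<close> k] by auto
  next
    case (Deca a k)
    then show ?thesis
      using args assms(2) root_redex_repl_good_Deca by (simp add: repl_simps is_enc_def)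
  next
    case (Check a b c)
    then show ?thesis
      using args assms(2) root_redex_repl_good_Check by (simp add: repl_simps is_enc_def)
  qed (use assms(2) good_not_secret[OF assms(1)] in \<open>simp_all add: repl_simps\<close>)
qed

lemma nf_repl_good: "good t \<Longrightarrow> nf t \<Longrightarrow> nf M \<Longrightarrow> nf (repl s M t)"
proof (induction t rule: msg_args_induct)
  case (args t)
  show ?case
  proof (cases "t \<in> frame_encs")
    case True
    then show ?thesis using nf_repl_destr_free destr_free_frame_encs args.prems(3) by blast
  next
    case False
    then have "\<forall>a \<in> set (args t). good a" using good_not_frame_encD args.prems(1) by blast
    then have "nf (repl s M a)" if "a \<in> set (args t)" for a
      using args.IH[OF that] args.prems(2,3) nf_iff[of t] that by blast
    moreover have "\<not> root_redex (repl s M t)"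
      using root_redex_repl_good args.prems(1,2) nf_iff by blast
    ultimately show ?thesis
      using nf_iff[of "repl s M t"] repl_head_args[OF good_not_secret[OF args.prems(1)]] by simp
  qed
qed

lemma root_redex_contract:
  assumes "root_redex t" "\<forall>a \<in> set (args t). good a \<and> nf a" "deduc \<phi> t"
  shows "\<exists>c. eqE t c \<and> good c \<and> nf c"
proof (cases t)
  case (Pi1 x)
  then obtain a b where x: "x = Pair a b" using assms(1) by auto
  then have "good a" "nf a" using Pi1 assms(2) good_arg[of x a] by (auto simp: is_enc_def)
  then show ?thesis using Pi1 x eqE.ax_pi1 by blast
next
  case (Pi2 x)
  then obtain a b where x: "x = Pair a b" using assms(1) by auto
  then have "good b" "nf b" using Pi2 assms(2) good_arg[of x b] by (auto simp: is_enc_def)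
  then show ?thesis using Pi2 x eqE.ax_pi2 by blast
next
  case (Retrieve x)
  then obtain a b where x: "x = Sign a b" using assms(1) by auto
  then have "good a" "nf a" using Retrieve assms(2) good_arg[of x a] by (auto simp: is_enc_def)
  then show ?thesis using Retrieve x eqE.ax_retrieve by blast
next
  case (Dec x k)
  then obtain a c where x: "x = Enc a k c" using assms(1) by auto
  then have "eqE t a" using Dec by (simp add: eqE.ax_dec)
  have "good x" "nf x" using assms(2) Dec by auto
  then have "good a" "nf a"
    using good_enc_args(2)[OF \<open>good x\<close>, of a k c] x d_eq[OF assms(3) \<open>eqE t a\<close>] by auto
  then show ?thesis using \<open>eqE t a\<close> by blast
next
  case (Deca x k)
  then obtain a w c where x: "x = Enca a (Pub w) c" "k = Priv w" using assms(1) by auto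
  then have "eqE t a" using Deca by (simp add: eqE.ax_deca)
  have "good x" "nf x" using assms(2) Deca by auto
  then have "good a" "nf a"
    using good_enc_args(2)[OF \<open>good x\<close>, of a "Pub w" c] x d_eq[OF assms(3) \<open>eqE t a\<close>] by auto
  then show ?thesis using \<open>eqE t a\<close> by blast
next
  case (Check a b c)
  then have "eqE t (Cst ''ok'')" using assms(1) by (auto intro: eqE.ax_check)
  moreover have "good (Cst ''ok'')" by (rule good_not_encI) (auto simp: is_enc_def)
  ultimately show ?thesis by auto
qed (use assms(1) in simp_all)

lemma good_norm_if_args:
  assumes "\<not> leaf t" "head t \<noteq> SPriv" "\<forall>a \<in> set (args t). good a \<and> nf a" "deduc \<phi> t"
  shows "good (norm t)"
proof (cases "root_redex t")
  case True
  then obtain c where "eqE t c" "good c" "nf c" using root_redex_contract assms(3,4) by blast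
  then show ?thesis using norm_eq_if_eqE by metis
next
  case False
  then have "nf t" using assms(3) nf_iff by blast
  moreover have "\<not> rand_enc t"
  proof
    assume "rand_enc t"
    then obtain a b r where "r \<in> rand" "t = Enc a b (Nm r) \<or> t = Enca a b (Nm r)"
      by (auto simp: rand_enc_def)
    then show False using assms(3) good_not_Nm[of "Nm r"] by auto
  qed
  ultimately show ?thesis using good_nonleafI assms(1,3) by simp
qed

lemma good_norm_if_deduc: "deduc \<phi> t \<Longrightarrow> good (norm t)"
proof -
  have "\<psi> = \<phi> \<Longrightarrow> good (norm t)" if "deduc \<psi> t" for \<psi> t
    using that
  proof (induction rule: deduc.induct)
    case (d_frame x \<psi>)
    then have x: "x \<in> dom \<sigma>" by simp
    have "destr_free (F (Vr x))"
      unfolding F_Vr[OF x] by (rule destr_free_F[OF destr_free_ran[OF the_in_ran[OF x]]])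
    then show ?case using d_frame.prems good_F_Vr[OF x] nf_if_destr_free by simp
  next
    case (d_name m \<psi>)
    then have "m \<notin> insert s rand" using restricted rand_subset by auto
    then show ?case by (intro good.step) (auto simp: rand_enc_def)
  next
    case (d_fun t \<psi>)
    then have "\<not> leaf t" using is_fun_iff_not_leaf by blast
    then obtain u where u: "head u = head t" "args u = map norm (args t)"
      using exists_head_args[of t "map norm (args t)"] by auto
    have "eqE t u"
      using u eqE_norm by (intro eqE.cong) (auto simp: list_all2_conv_all_nth)
    moreover have "deduc \<psi> t"
      using d_fun.hyps d_fun.IH by (intro deduc.d_fun) auto
    ultimately have "deduc \<phi> u" using d_fun.prems d_eq by blast
    moreover have "\<not> leaf u" using u \<open>\<not> leaf t\<close> leaf_iff_head by metis
    moreover have "head u \<noteq> SPriv" using u d_fun.hyps(2) by simp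
    moreover have "\<forall>a \<in> set (args u). good a \<and> nf a" using u d_fun.IH d_fun.prems by auto
    ultimately have "good (norm u)" using good_norm_if_args by blast
    then show ?case using norm_eq_if_eqE[OF \<open>eqE t u\<close>] by simp
  next
    case (d_eq \<psi> t t')
    then show ?case using norm_eq_if_eqE by metis
  qed
  then show "deduc \<phi> t \<Longrightarrow> good (norm t)" by blast
qed


lemma norm_repl_good: "good (norm t) \<Longrightarrow> norm (repl s M t) = repl s (norm M) (norm t)"
proof -
  assume good: "good (norm t)"
  have "eqE (repl s M t) (repl s (norm M) (norm t))"
    using eqE_repl[OF eqE_norm] eqE_repl_arg[OF eqE_norm] by (blast intro: eqE.trans)
  then have "norm (repl s M t) = norm (repl s (norm M) (norm t))"
    by (rule norm_eq_if_eqE)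
  also have "\<dots> = repl s (norm M) (norm t)"
    using nf_repl_good[OF good] by simp
  finally show ?thesis .
qed

lemma passes_frame_repl_iff:
  assumes "closed M" "public (fst \<phi>) U" "vars U \<subseteq> dom \<sigma>" "public (fst \<phi>) V" "vars V \<subseteq> dom \<sigma>"
  shows "passes (frame_repl \<phi> s M) U V \<longleftrightarrow> passes \<phi> U V"
proof -
  have "s \<notin> fn U" "s \<notin> fn V" using assms(2,4) restricted by (auto simp: public_def)
  moreover have "good (norm (F U))" "good (norm (F V))"
    using good_norm_if_deduc deduc_fapp_public assms(2-5) by blast+
  ultimately have "passes (frame_repl \<phi> s M) U V \<longleftrightarrow>
      repl s (norm M) (norm (F U)) = repl s (norm M) (norm (F V))"
    unfolding passes_def eqE_iff_norm using fapp_frame_repl[OF assms(1)] norm_repl_good by simp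
  also have "\<dots> \<longleftrightarrow> norm (F U) = norm (F V)"
    using good_repl_inj[OF \<open>good (norm (F U))\<close> \<open>good (norm (F V))\<close>] by auto
  finally show ?thesis
    unfolding passes_def eqE_iff_norm .
qed

lemma stat_eq_frame_repl:
  "closed M \<Longrightarrow> closed M' \<Longrightarrow> stat_eq (frame_repl \<phi> s M) (frame_repl \<phi> s M')"
  using passes_frame_repl_iff unfolding stat_eq_def by simp

end

theorem theorem2p6:
  fixes \<phi> :: frame and s :: nat
  assumes "is_frame \<phi>"
    and "s \<in> fst \<phi>"
    and "well_formed \<phi> s"
  shows "\<not> deduc \<phi> (Nm s) \<longleftrightarrow>
    (\<forall>M M'. closed M \<and> closed M' \<and> public (fst \<phi>) M \<and> public (fst \<phi>) M'
       \<longrightarrow> stat_eq (frame_repl \<phi> s M) (frame_repl \<phi> s M'))"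
proof
  assume "\<not> deduc \<phi> (Nm s)"
  with assms interpret secret_frame \<phi> s
    by unfold_locales
  show "\<forall>M M'. closed M \<and> closed M' \<and> public (fst \<phi>) M \<and> public (fst \<phi>) M'
      \<longrightarrow> stat_eq (frame_repl \<phi> s M) (frame_repl \<phi> s M')"
    using stat_eq_frame_repl by blast
next
  assume "\<forall>M M'. closed M \<and> closed M' \<and> public (fst \<phi>) M \<and> public (fst \<phi>) M'
      \<longrightarrow> stat_eq (frame_repl \<phi> s M) (frame_repl \<phi> s M')"
  then show "\<not> deduc \<phi> (Nm s)"
    using not_stat_eq_if_deduc[OF assms(2)] closed_public_Cst by blast
qed

end
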